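(* None of the following pairs of consecutive patterns is reciprocal: $(\underline{2010},\underline{2120})$, $(\underline{1000},\underline{1110})$, $(\underline{2100},\underline{2210})$. Here two consecutive patterns $p,q$ are reciprocal if for every $n\ge1$ and all $S,T\subseteq[n]$, $$|\{\epsilon\in I_n:\operatorname{Em}(p,\epsilon)=S,\ \operatorname{Em}(q,\epsilon)=T\}|=|\{\epsilon\in I_n:\operatorname{Em}(p,\epsilon)=T,\ \operatorname{Em}(q,\epsilon)=S\}|.$$
   Context: An inversion sequence of length $n$ is an integer sequence $\epsilon=\epsilon_1\cdots\epsilon_n$ with $0\le\epsilon_i<i$ for all $i$; $I_n$ denotes the set of them. The reduction of an integer word is obtained by replacing every occurrence of its $k$-th smallest distinct value by $k-1$. A consecutive pattern $p=\underline{p_1\cdots p_r}$ occurs in a sequence $\epsilon$ at position $i$ if the reduction of $\epsilon_i\cdots\epsilon_{i+r-1}$ equals $p_1\cdots p_r$. $\operatorname{Em}(p,\epsilon)$ is the set of positions at which $p$ occurs in $\epsilon$. *)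

theory Defs
  imports Main
begin

text \<open>Inversion sequences of length n, as lists: entry i (1-based) satisfies 0 \<le> e_i < i,
  i.e. the list entry at 0-based index j satisfies e ! j < j + 1.\<close>
definition inv_seqs :: "nat \<Rightarrow> nat list set" where
  "inv_seqs n = {e. length e = n \<and> (\<forall>j < n. e ! j < Suc j)}"

definition reduction :: "nat list \<Rightarrow> nat list" where
  "reduction w = map (\<lambda>x. card {y \<in> set w. y < x}) w"

definition Em :: "nat list \<Rightarrow> nat list \<Rightarrow> nat set" where
  "Em p e = {i \<in> {1..length e}. i + length p - 1 \<le> length e \<and>
                 reduction (take (length p) (drop (i - 1) e)) = p}"

definition reciprocal :: "nat list \<Rightarrow> nat list \<Rightarrow> bool" where
  "reciprocal p q \<longleftrightarrow> (\<forall>n \<ge> 1. \<forall>S T. S \<subseteq> {1..n} \<longrightarrow> T \<subseteq> {1..n} \<longrightarrow>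
      card {e \<in> inv_seqs n. Em p e = S \<and> Em q e = T} =
      card {e \<in> inv_seqs n. Em p e = T \<and> Em q e = S})"

end

theory Submission
  imports Defs
begin

text \<open>For each pair (p, q) we exhibit an inversion sequence w with Em(p, w) = S and Em(q, w) = T
  such that no inversion sequence has Em(p, e) = T and Em(q, e) = S; the two counts in the
  definition of reciprocity are then positive and zero. Since reduction preserves the relative
  order of entries, an occurrence of a pattern pins down comparisons between entries of e.
  For the last two pairs the swapped occurrences overlap and demand both e_4 = e_5 and
  e_5 < e_4 (1-based indices); for the first pair they force e_8 < e_6 < e_5 < e_3 \<le> 2.\<close>

lemma strict_mono_on_card_less:
  fixes w :: "'a::linorder list"
  shows "strict_mono_on (set w) (\<lambda>x. card {y \<in> set w. y < x})"
proof (rule strict_mono_onI)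
  fix x x' assume "x \<in> set w" "x < x'"
  then have "{y \<in> set w. y < x} \<subset> {y \<in> set w. y < x'}"
    by auto
  then show "card {y \<in> set w. y < x} < card {y \<in> set w. y < x'}"
    by (simp add: psubset_card_mono)
qed

lemma nth_reduction_less_iff:
  assumes "a < length w" "b < length w"
  shows "reduction w ! a < reduction w ! b \<longleftrightarrow> w ! a < w ! b"
  using assms by (simp add: reduction_def strict_mono_on_less[OF strict_mono_on_card_less])

lemma nth_reduction_eq_iff:
  assumes "a < length w" "b < length w"
  shows "reduction w ! a = reduction w ! b \<longleftrightarrow> w ! a = w ! b"
  using assms by (simp add: reduction_def strict_mono_on_eq[OF strict_mono_on_card_less])

lemma Em_window:
  assumes "i \<in> Em p e" "a < length p"
  shows "take (length p) (drop (i - 1) e) ! a = e ! (i - 1 + a)"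
    and "a < length (take (length p) (drop (i - 1) e))"
  using assms by (auto simp: Em_def)

lemma Em_nth_less_iff:
  assumes "i \<in> Em p e" "a < length p" "b < length p"
  shows "p ! a < p ! b \<longleftrightarrow> e ! (i - 1 + a) < e ! (i - 1 + b)"
proof -
  have "reduction (take (length p) (drop (i - 1) e)) = p"
    using assms(1) by (simp add: Em_def)
  then show ?thesis
    using nth_reduction_less_iff[OF Em_window(2)[OF assms(1,2)] Em_window(2)[OF assms(1,3)]]
      Em_window(1)[OF assms(1,2)] Em_window(1)[OF assms(1,3)]
    by simp
qed

lemma Em_nth_eq_iff:
  assumes "i \<in> Em p e" "a < length p" "b < length p"
  shows "p ! a = p ! b \<longleftrightarrow> e ! (i - 1 + a) = e ! (i - 1 + b)"
proof -
  have "reduction (take (length p) (drop (i - 1) e)) = p"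
    using assms(1) by (simp add: Em_def)
  then show ?thesis
    using nth_reduction_eq_iff[OF Em_window(2)[OF assms(1,2)] Em_window(2)[OF assms(1,3)]]
      Em_window(1)[OF assms(1,2)] Em_window(1)[OF assms(1,3)]
    by simp
qed

lemma Em_subset: "Em p e \<subseteq> {1..length e}"
  by (auto simp: Em_def)

lemma finite_inv_seqs: "finite (inv_seqs n)"
proof (rule finite_subset)
  show "inv_seqs n \<subseteq> {e. set e \<subseteq> {..<n} \<and> length e = n}"
    by (auto simp: inv_seqs_def in_set_conv_nth less_Suc_eq_le) (meson le_less_trans)
  show "finite {e. set e \<subseteq> {..<n} \<and> length e = n}"
    by (rule finite_lists_length_eq) simp
qed

lemma not_reciprocalI:
  assumes w: "w \<in> inv_seqs n" and "n \<ge> 1" and S: "Em p w = S" and T: "Em q w = T"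
    and no_swap: "\<And>e. e \<in> inv_seqs n \<Longrightarrow> Em p e = T \<Longrightarrow> Em q e = S \<Longrightarrow> False"
  shows "\<not> reciprocal p q"
proof
  assume "reciprocal p q"
  moreover have "S \<subseteq> {1..n}" "T \<subseteq> {1..n}"
    using w Em_subset S T by (auto simp: inv_seqs_def)
  ultimately have "card {e \<in> inv_seqs n. Em p e = S \<and> Em q e = T} =
      card {e \<in> inv_seqs n. Em p e = T \<and> Em q e = S}"
    using \<open>n \<ge> 1\<close> unfolding reciprocal_def by blast
  also have "{e \<in> inv_seqs n. Em p e = T \<and> Em q e = S} = {}"
    using no_swap by blast
  finally have "card {e \<in> inv_seqs n. Em p e = S \<and> Em q e = T} = 0"
    by simp
  then show False
    using w S T finite_inv_seqs[of n] by (auto simp: card_eq_0_iff)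
qed

lemma Em_conv_filter:
  "Em p e = set (filter (\<lambda>i. i + length p - 1 \<le> length e \<and>
     reduction (take (length p) (drop (i - 1) e)) = p) [1..<Suc (length e)])"
  by (auto simp: Em_def)

lemma reduction_conv_remdups:
  "reduction w = map (\<lambda>x. length (remdups (filter (\<lambda>y. y < x) w))) w"
  by (simp add: reduction_def length_remdups_card_conv)

lemma inv_seqs_witnesses:
  "[0,0,2,1,2,0,1,0] \<in> inv_seqs 8"
  "[0,0,2,1,1,1,0] \<in> inv_seqs 7"
  "[0,0,2,2,1,0,0] \<in> inv_seqs 7"
  by (auto simp: inv_seqs_def eval_nat_numeral less_Suc_eq)

lemma Em_witnesses:
  "Em [2,0,1,0] [0,0,2,1,2,0,1,0] = {5}" "Em [2,1,2,0] [0,0,2,1,2,0,1,0] = {3}"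
  "Em [1,0,0,0] [0,0,2,1,1,1,0] = {3}" "Em [1,1,1,0] [0,0,2,1,1,1,0] = {4}"
  "Em [2,1,0,0] [0,0,2,2,1,0,0] = {4}" "Em [2,2,1,0] [0,0,2,2,1,0,0] = {3}"
  by (simp_all add: Em_conv_filter reduction_conv_remdups upt_conv_Cons)

lemma not_Em_2010_at_3_and_2120_at_5:
  assumes "e \<in> inv_seqs n" "3 \<in> Em [2,0,1,0] e" "5 \<in> Em [2,1,2,0] e"
  shows False
proof -
  have "2 < length e"
    using assms(2) by (simp add: Em_def)
  moreover have "\<forall>j < length e. e ! j < Suc j"
    using assms(1) by (simp add: inv_seqs_def)
  ultimately have "e ! 2 \<le> 2"
    by (metis less_Suc_eq_le)
  moreover have "e ! 4 < e ! 2" "e ! 5 < e ! 4"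
    using Em_nth_less_iff[OF assms(2), of 2 0] Em_nth_less_iff[OF assms(2), of 3 2] by simp_all
  moreover have "e ! 7 < e ! 5"
    using Em_nth_less_iff[OF assms(3), of 3 1] by simp
  ultimately show False by linarith
qed

lemma not_Em_1000_at_4_and_1110_at_3:
  assumes "4 \<in> Em [1,0,0,0] e" "3 \<in> Em [1,1,1,0] e"
  shows False
  using Em_nth_less_iff[OF assms(1), of 1 0] Em_nth_eq_iff[OF assms(2), of 1 2] by simp

lemma not_Em_2100_at_3_and_2210_at_4:
  assumes "3 \<in> Em [2,1,0,0] e" "4 \<in> Em [2,2,1,0] e"
  shows False
  using Em_nth_less_iff[OF assms(1), of 2 1] Em_nth_eq_iff[OF assms(2), of 0 1] by simp

theorem mainTheorem3:
  shows "\<not> reciprocal [2,0,1,0] [2,1,2,0] \<and> \<not> reciprocal [1,0,0,0] [1,1,1,0]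
       \<and> \<not> reciprocal [2,1,0,0] [2,2,1,0]"
proof (intro conjI)
  show "\<not> reciprocal [2,0,1,0] [2,1,2,0]"
    by (rule not_reciprocalI[OF inv_seqs_witnesses(1) _ Em_witnesses(1,2)])
      (simp, blast intro: not_Em_2010_at_3_and_2120_at_5)
  show "\<not> reciprocal [1,0,0,0] [1,1,1,0]"
    by (rule not_reciprocalI[OF inv_seqs_witnesses(2) _ Em_witnesses(3,4)])
      (simp, blast intro: not_Em_1000_at_4_and_1110_at_3)
  show "\<not> reciprocal [2,1,0,0] [2,2,1,0]"
    by (rule not_reciprocalI[OF inv_seqs_witnesses(3) _ Em_witnesses(5,6)])
      (simp, blast intro: not_Em_2100_at_3_and_2210_at_4)
qed

end
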